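(* There are absolute constants $c>0$ and $C$ such that for all $n$: if $A\subseteq\{0,1\}^n$ is a uniformly random subset of size exactly $2^{n-1}$, then with probability at least $1-2^{-2^{cn}}$ there exists a bijection $\phi\colon\{0,1\}^{n-1}\to A$ such that $\Pr_{x\in\{0,1\}^{n-1}}[{\sf dist}(x,\phi(x)_{[1,\dots,n-1]})\le 1]\ge 1-C/n$.
   Context: $z_{[1,\dots,n-1]}$ denotes the restriction of $z\in\{0,1\}^n$ to its first $n-1$ coordinates; ${\sf dist}$ is Hamming distance; $x$ is uniform in $\{0,1\}^{n-1}$. *)

theory Defs
  imports Main "HOL-Library.Disjoint_Sets" Complex_Main
begin

definition cube :: "nat \<Rightarrow> bool list set" where
  "cube n = {xs. length xs = n}"

definition hamming :: "bool list \<Rightarrow> bool list \<Rightarrow> nat" where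
  "hamming xs ys = card {i. i < length xs \<and> xs ! i \<noteq> ys ! i}"

definition unif_prob :: "'a set \<Rightarrow> ('a \<Rightarrow> bool) \<Rightarrow> real" where
  "unif_prob S P = real (card {x \<in> S. P x}) / real (card S)"

definition good_matching :: "real \<Rightarrow> nat \<Rightarrow> bool list set \<Rightarrow> bool" where
  "good_matching C n A \<longleftrightarrow>
     (\<exists>\<phi>. bij_betw \<phi> (cube (n - 1)) A \<and>
        unif_prob (cube (n - 1)) (\<lambda>x. hamming x (take (n - 1) (\<phi> x)) \<le> 1) \<ge> 1 - C / real n)"

end

theory Submission
  imports Defs "HOL-Real_Asymp.Real_Asymp"
begin

text \<open>
  Write n = m + 1. For A \<subseteq> {0,1}^n with |A| = 2^m call z \<in> {0,1}^m surplus if both extensions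
  z0, z1 lie in A and deficient if neither does; the two kinds are equally numerous, and every
  other z is sent to its unique extension in A. Deficient and surplus points are paired greedily in
  rounds j = 0, 1, ..., t - 1: in round j, z is paired with its neighbour across coordinate j if
  both are still unpaired, and the deficient point receives the spare extension of the surplus one,
  at Hamming distance 1. Only the deficient points left after t rounds have to be sent far away.

  For a uniformly random A \<subseteq> {0,1}^n of arbitrary size, the fate of u @ s after j = |u|
  rounds depends only on A restricted to the block of points u' @ s @ [b], and the two halves of
  this block decide u @ s and its round-j neighbour independently. Hence the probability d(j) of
  still being unpaired satisfies d(0) = 1/4 and d(j+1) = d(j)(1 - d(j)), so d(j) \<le> 1/(j+4).
  For t = m/2 the 2^(m-t) blocks are independent, and an exponential-moment bound shows that more
  than a fraction 4/(t+4) \<le> 8/n of the points stays unpaired only with probability about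
  exp(-2^(m/2)/(m+5)). Conditioning on |A| = 2^m costs only a factor 2^n, as
  (2^n choose 2^m) \<ge> 2^(2^n)/2^n.
\<close>

section \<open>Sums over the subsets of a finite set\<close>

lemma sum_Pow_Un:
  assumes "X \<inter> Y = {}"
  shows "(\<Sum>A\<in>Pow (X \<union> Y). F A) = (\<Sum>A\<in>Pow X. \<Sum>B\<in>Pow Y. F (A \<union> B))"
proof -
  have "bij_betw (\<lambda>(A, B). A \<union> B) (Pow X \<times> Pow Y) (Pow (X \<union> Y))"
    by (rule bij_betw_byWitness[where f' = "\<lambda>A. (A \<inter> X, A \<inter> Y)"]) (use assms in auto)
  then have "(\<Sum>A\<in>Pow (X \<union> Y). F A) = (\<Sum>(A, B)\<in>Pow X \<times> Pow Y. F (A \<union> B))"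
    by (simp add: sum.reindex_bij_betw[symmetric] case_prod_unfold)
  then show ?thesis by (simp add: sum.cartesian_product)
qed

lemma sum_Pow_Un_mult:
  fixes f g :: "'a set \<Rightarrow> 'b::comm_semiring_1"
  assumes "X \<inter> Y = {}" "\<And>A. f A = f (A \<inter> X)" "\<And>A. g A = g (A \<inter> Y)"
  shows "(\<Sum>A\<in>Pow (X \<union> Y). f A * g A) = (\<Sum>A\<in>Pow X. f A) * (\<Sum>B\<in>Pow Y. g B)"
proof -
  have "f (A \<union> B) * g (A \<union> B) = f A * g B" if "A \<subseteq> X" "B \<subseteq> Y" for A B
  proof -
    have "(A \<union> B) \<inter> X = A \<inter> X" "(A \<union> B) \<inter> Y = B \<inter> Y"
      using that assms(1) by auto
    then show ?thesis by (metis assms(2,3))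
  qed
  then show ?thesis
    by (simp add: sum_Pow_Un[OF assms(1)] sum_product)
qed

lemma sum_Pow_UN_prod:
  fixes g :: "'i \<Rightarrow> 'a set \<Rightarrow> 'b::comm_semiring_1"
  assumes "finite I" "disjoint_family_on L I" "\<And>i A. i \<in> I \<Longrightarrow> g i A = g i (A \<inter> L i)"
  shows "(\<Sum>A\<in>Pow (\<Union>i\<in>I. L i). \<Prod>i\<in>I. g i A) = (\<Prod>i\<in>I. \<Sum>A\<in>Pow (L i). g i A)"
  using assms
proof (induction I rule: finite_induct)
  case (insert i I)
  let ?U = "\<Union>k\<in>I. L k"
  have disj: "L i \<inter> ?U = {}"
    using insert.prems(1) insert.hyps(2) by (auto simp: disjoint_family_on_def)
  have loc_i: "g i A = g i (A \<inter> L i)" for A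
    using insert.prems(2) by blast
  have loc_U: "(\<Prod>k\<in>I. g k A) = (\<Prod>k\<in>I. g k (A \<inter> ?U))" for A
  proof (intro prod.cong refl)
    fix k assume "k \<in> I"
    then have "A \<inter> ?U \<inter> L k = A \<inter> L k" by auto
    with \<open>k \<in> I\<close> show "g k A = g k (A \<inter> ?U)" by (metis insert.prems(2) insertCI)
  qed
  have "(\<Sum>A\<in>Pow (\<Union>k\<in>insert i I. L k). \<Prod>k\<in>insert i I. g k A)
      = (\<Sum>A\<in>Pow (L i \<union> ?U). g i A * (\<Prod>k\<in>I. g k A))"
    using insert.hyps by simp
  also have "\<dots> = (\<Sum>A\<in>Pow (L i). g i A) * (\<Sum>A\<in>Pow ?U. \<Prod>k\<in>I. g k A)"
    by (rule sum_Pow_Un_mult[where f = "g i" and g = "\<lambda>A. \<Prod>k\<in>I. g k A", OF disj loc_i loc_U])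
  also have "(\<Sum>A\<in>Pow ?U. \<Prod>k\<in>I. g k A) = (\<Prod>k\<in>I. \<Sum>A\<in>Pow (L k). g k A)"
    using insert.prems(1)
    by (intro insert.IH disjoint_family_on_mono[of I "insert i I"]) (auto intro: insert.prems(2))
  finally show ?case using insert.hyps by simp
qed simp

lemma card_Pow_sum_ge_chernoff:
  fixes Y :: "'i \<Rightarrow> 'a set \<Rightarrow> real" and p a :: real
  assumes "finite I" "disjoint_family_on L I" "\<And>i. i \<in> I \<Longrightarrow> finite (L i)"
    and local: "\<And>i A. i \<in> I \<Longrightarrow> Y i A = Y i (A \<inter> L i)"
    and nonneg: "\<And>i A. i \<in> I \<Longrightarrow> 0 \<le> Y i A" and le_1: "\<And>i A. i \<in> I \<Longrightarrow> Y i A \<le> 1"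
    and mean: "\<And>i. i \<in> I \<Longrightarrow> (\<Sum>A\<in>Pow (L i). Y i A) \<le> p * 2 ^ card (L i)"
  shows "card {A \<in> Pow (\<Union>i\<in>I. L i). a \<le> (\<Sum>i\<in>I. Y i A)}
           \<le> 2 ^ card (\<Union>i\<in>I. L i) * exp (p * card I - a / 2)"
proof -
  let ?U = "\<Union>i\<in>I. L i" and ?Bad = "{A \<in> Pow (\<Union>i\<in>I. L i). a \<le> (\<Sum>i\<in>I. Y i A)}"
  have finU: "finite ?U" using assms(1,3) by blast
  have block_bound: "(\<Sum>A\<in>Pow (L i). exp (Y i A / 2)) \<le> 2 ^ card (L i) * (1 + p)" if "i \<in> I" for i
  proof -
    have "(\<Sum>A\<in>Pow (L i). exp (Y i A / 2)) \<le> (\<Sum>A\<in>Pow (L i). 1 + Y i A)"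
    proof (rule sum_mono)
      fix A
      have "exp (Y i A / 2) \<le> 1 + 2 * (Y i A / 2)"
        using nonneg[OF that] le_1[OF that] by (intro real_exp_bound_lemma) auto
      then show "exp (Y i A / 2) \<le> 1 + Y i A" by simp
    qed
    also have "\<dots> \<le> 2 ^ card (L i) * (1 + p)"
      using mean[OF that] assms(3)[OF that] by (simp add: sum.distrib card_Pow algebra_simps)
    finally show ?thesis .
  qed
  have "real (card ?Bad) * exp (a / 2) = (\<Sum>A\<in>?Bad. exp (a / 2))" by simp
  also have "\<dots> \<le> (\<Sum>A\<in>?Bad. exp ((\<Sum>i\<in>I. Y i A) / 2))"
    by (intro sum_mono) auto
  also have "\<dots> \<le> (\<Sum>A\<in>Pow ?U. exp ((\<Sum>i\<in>I. Y i A) / 2))"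
    using finU by (intro sum_mono2) auto
  also have "\<dots> = (\<Sum>A\<in>Pow ?U. \<Prod>i\<in>I. exp (Y i A / 2))"
    by (simp add: sum_divide_distrib exp_sum assms(1))
  also have "\<dots> = (\<Prod>i\<in>I. \<Sum>A\<in>Pow (L i). exp (Y i A / 2))"
    using local by (intro sum_Pow_UN_prod assms(1,2)) metis
  also have "\<dots> \<le> (\<Prod>i\<in>I. 2 ^ card (L i) * exp p)"
  proof (intro prod_mono conjI)
    fix i assume "i \<in> I"
    then show "0 \<le> (\<Sum>A\<in>Pow (L i). exp (Y i A / 2))" by (simp add: sum_nonneg)
    have "(2::real) ^ card (L i) * (1 + p) \<le> 2 ^ card (L i) * exp p"
      by (intro mult_left_mono exp_ge_add_one_self) simp
    with block_bound[OF \<open>i \<in> I\<close>]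
    show "(\<Sum>A\<in>Pow (L i). exp (Y i A / 2)) \<le> 2 ^ card (L i) * exp p"
      by (rule order_trans)
  qed
  also have "\<dots> = 2 ^ card ?U * exp (p * card I)"
    using assms(1-3)
    by (simp add: prod.distrib card_UN_disjoint' power_sum exp_of_nat_mult[symmetric] mult.commute)
  finally have "real (card ?Bad) \<le> 2 ^ card ?U * exp (p * card I) / exp (a / 2)"
    by (simp add: le_divide_eq)
  then show ?thesis by (simp add: exp_diff)
qed

lemma bij_betw_extend_inj_on:
  assumes "finite X" "finite Y" "card X = card Y" "G \<subseteq> X" "inj_on f G" "f ` G \<subseteq> Y"
  shows "\<exists>g. bij_betw g X Y \<and> (\<forall>x\<in>G. g x = f x)"
proof -
  have "card (X - G) = card (Y - f ` G)"
    using assms by (simp add: card_Diff_subset card_image finite_subset)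
  then obtain h where h: "bij_betw h (X - G) (Y - f ` G)"
    using finite_same_card_bij assms(1,2) by blast
  define g where "g x = (if x \<in> G then f x else h x)" for x
  have "bij_betw g G (f ` G)"
    using assms(5) by (simp add: bij_betw_def g_def inj_on_def)
  moreover have "bij_betw g (X - G) (Y - f ` G)"
    using h by (rule bij_betw_cong[THEN iffD1, rotated]) (simp add: g_def)
  ultimately have "bij_betw g (G \<union> (X - G)) (f ` G \<union> (Y - f ` G))"
    by (rule bij_betw_combine) blast
  moreover have "G \<union> (X - G) = X" "f ` G \<union> (Y - f ` G) = Y" using assms(4,6) by blast+
  ultimately show ?thesis by (auto simp: g_def)
qed

lemma unif_prob_ge:
  fixes b :: real
  assumes "finite S" "S \<noteq> {}" "card {x \<in> S. \<not> P x} \<le> b"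
  shows "1 - b / card S \<le> unif_prob S P"
proof -
  have "card {x \<in> S. P x} + card {x \<in> S. \<not> P x} = card S"
    using assms(1) by (subst card_Un_disjoint[symmetric]) (auto intro: arg_cong[where f = card])
  then have "unif_prob S P = 1 - card {x \<in> S. \<not> P x} / card S"
    using assms(1,2) by (simp add: unif_prob_def field_simps flip: of_nat_add)
  with assms show ?thesis
    by (simp add: divide_right_mono)
qed

section \<open>The cube and its blocks\<close>

lemma finite_cube [simp]: "finite (cube n)"
  by (simp add: cube_def finite_list_length)

lemma card_cube: "card (cube n) = 2 ^ n"
  using card_lists_length_eq[of "UNIV :: bool set" n] by (simp add: cube_def)

lemma card_cube_split:
  assumes "t \<le> m"
  shows "card {x \<in> cube m. P x} = (\<Sum>s\<in>cube (m - t). card {u \<in> cube t. P (u @ s)})"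
proof -
  have bij: "bij_betw (\<lambda>(u, s). u @ s) (cube t \<times> cube (m - t)) (cube m)"
    by (rule bij_betw_byWitness[where f' = "\<lambda>x. (take t x, drop t x)"])
      (use assms in \<open>auto simp: cube_def\<close>)
  have "card {x \<in> cube m. P x} = (\<Sum>x\<in>cube m. of_bool (P x))"
    by (simp add: Int_def)
  also have "\<dots> = (\<Sum>(u, s)\<in>cube t \<times> cube (m - t). of_bool (P (u @ s)))"
    by (simp add: sum.reindex_bij_betw[OF bij, symmetric] case_prod_unfold)
  also have "\<dots> = (\<Sum>u\<in>cube t. \<Sum>s\<in>cube (m - t). of_bool (P (u @ s)))"
    by (rule sum.cartesian_product[symmetric])
  also have "\<dots> = (\<Sum>s\<in>cube (m - t). \<Sum>u\<in>cube t. of_bool (P (u @ s)))"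
    by (rule sum.swap)
  also have "\<dots> = (\<Sum>s\<in>cube (m - t). card {u \<in> cube t. P (u @ s)})"
    by (simp add: Int_def)
  finally show ?thesis .
qed

lemma card_half_subsets_ge:
  "2 ^ 2 ^ Suc m / 2 ^ Suc m \<le> real (card {A. A \<subseteq> cube (Suc m) \<and> card A = 2 ^ m})"
proof -
  have "card {A. A \<subseteq> cube (Suc m) \<and> card A = 2 ^ m} = (2 * 2 ^ m) choose 2 ^ m"
    by (simp add: n_subsets card_cube)
  moreover have "4 ^ 2 ^ m / (2 * real (2 ^ m)) \<le> real ((2 * 2 ^ m) choose 2 ^ m)"
    by (rule central_binomial_lower_bound) simp
  moreover have "(4::real) ^ 2 ^ m = 2 ^ 2 ^ Suc m"
    by (simp add: power_mult)
  ultimately show ?thesis by simp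
qed

lemma card_half_subsets_pos: "0 < card {A. A \<subseteq> cube (Suc m) \<and> card A = 2 ^ m}"
proof -
  have "(0::real) < 2 ^ 2 ^ Suc m / 2 ^ Suc m" by simp
  with card_half_subsets_ge[of m] show ?thesis by linarith
qed

definition flip :: "nat \<Rightarrow> bool list \<Rightarrow> bool list" where
  "flip j x = x[j := \<not> x ! j]"

lemma length_flip [simp]: "length (flip j x) = length x"
  by (simp add: flip_def)

lemma flip_flip [simp]: "flip j (flip j x) = x"
  by (cases "j < length x") (simp_all add: flip_def list_update_beyond)

lemma flip_append: "length u = j \<Longrightarrow> flip j (u @ c # s) = u @ (\<not> c) # s"
  by (simp add: flip_def list_update_append nth_append)

lemma hamming_refl [simp]: "hamming x x = 0"
  by (simp add: hamming_def)

lemma hamming_flip: "j < length x \<Longrightarrow> hamming x (flip j x) = 1"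
proof -
  assume "j < length x"
  then have "{i. i < length x \<and> x ! i \<noteq> flip j x ! i} = {j}"
    by (auto simp: flip_def nth_list_update)
  then show ?thesis by (simp add: hamming_def)
qed

definition block :: "nat \<Rightarrow> bool list \<Rightarrow> bool list set" where
  "block j s = {u @ s @ [b] | u b. length u = j}"

lemma block_0: "block 0 s = {s @ [False], s @ [True]}"
  by (auto simp: block_def)

lemma block_Suc: "block (Suc j) s = block j (c # s) \<union> block j ((\<not> c) # s)"
proof
  show "block (Suc j) s \<subseteq> block j (c # s) \<union> block j ((\<not> c) # s)"
  proof
    fix y assume "y \<in> block (Suc j) s"
    then obtain u b where y: "y = u @ s @ [b]" "length u = Suc j" by (auto simp: block_def)
    then obtain u' d where "u = u' @ [d]" "length u' = j" by (metis length_Suc_conv_rev)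
    with y show "y \<in> block j (c # s) \<union> block j ((\<not> c) # s)"
      by (cases "d = c") (auto simp: block_def)
  qed
next
  show "block j (c # s) \<union> block j ((\<not> c) # s) \<subseteq> block (Suc j) s"
  proof
    fix y assume "y \<in> block j (c # s) \<union> block j ((\<not> c) # s)"
    then obtain u b d where "y = (u @ [d]) @ s @ [b]" "length u = j" by (auto simp: block_def)
    then show "y \<in> block (Suc j) s" unfolding block_def by fastforce
  qed
qed

lemma block_disjoint:
  assumes "length s = length s'" "s \<noteq> s'" shows "block j s \<inter> block j s' = {}"
proof (rule ccontr)
  assume "block j s \<inter> block j s' \<noteq> {}"
  then obtain u b u' b' where "u @ s @ [b] = u' @ s' @ [b']" "length u = j" "length u' = j"
    unfolding block_def by blast
  then have "s @ [b] = s' @ [b']" by simp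
  with assms show False by simp
qed

lemma finite_block [simp]: "finite (block j s)"
proof -
  have "block j s = (\<lambda>(u, b). u @ s @ [b]) ` ({u. length u = j} \<times> UNIV)"
    by (auto simp: block_def)
  then show ?thesis by (simp add: finite_list_length)
qed

lemma cube_Suc_eq_UN_block: "t \<le> m \<Longrightarrow> cube (Suc m) = (\<Union>s\<in>cube (m - t). block t s)"
proof (intro equalityI subsetI)
  fix y assume tm: "t \<le> m" and "y \<in> cube (Suc m)"
  then have "length y = Suc m" by (simp add: cube_def)
  then obtain x b where y: "y = x @ [b]" "length x = m"
    by (metis length_Suc_conv_rev length_append_singleton nat.inject)
  then have "y = take t x @ drop t x @ [b]" "length (take t x) = t" "drop t x \<in> cube (m - t)"
    using tm by (auto simp: cube_def)
  then show "y \<in> (\<Union>s\<in>cube (m - t). block t s)" unfolding block_def by blast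
qed (auto simp: block_def cube_def)

section \<open>Greedy matching along coordinate directions\<close>

text \<open>
  \<open>unmatched True j A z\<close>: z is surplus (both of its extensions lie in A) and was not paired
  in rounds \<open>< j\<close>; \<open>unmatched False j A z\<close> is the deficient analogue.
\<close>

fun unmatched :: "bool \<Rightarrow> nat \<Rightarrow> bool list set \<Rightarrow> bool list \<Rightarrow> bool" where
  "unmatched b 0 A z \<longleftrightarrow> (z @ [False] \<in> A \<longleftrightarrow> b) \<and> (z @ [True] \<in> A \<longleftrightarrow> b)"
| "unmatched b (Suc j) A z \<longleftrightarrow> unmatched b j A z \<and> \<not> unmatched (\<not> b) j A (flip j z)"

lemma unmatched_antimono: "unmatched b j A z \<Longrightarrow> i \<le> j \<Longrightarrow> unmatched b i A z"
  by (induction j) (auto simp: le_Suc_eq)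

lemma unmatched_last_round_unique:
  assumes "unmatched b i A z" "\<not> unmatched b (Suc i) A z"
    and "unmatched b j A z" "\<not> unmatched b (Suc j) A z"
  shows "i = j"
  using assms unmatched_antimono by (metis Suc_leI linorder_neqE_nat)

lemma unmatched_local:
  "length u = j \<Longrightarrow> A \<inter> block j s = A' \<inter> block j s \<Longrightarrow>
     unmatched b j A (u @ s) = unmatched b j A' (u @ s)"
proof (induction j arbitrary: u s b)
  case 0
  then have "s @ [c] \<in> A \<longleftrightarrow> s @ [c] \<in> A'" for c
    by (auto simp: block_0)
  with 0 show ?case by simp
next
  case (Suc j)
  then obtain u' c where u: "u = u' @ [c]" "length u' = j" by (metis length_Suc_conv_rev)
  have "A \<inter> block j d = A' \<inter> block j d" if "d \<in> {c # s, (\<not> c) # s}" for d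
    using Suc.prems(2) that block_Suc[of j s c] by blast
  then show ?case using Suc.IH[OF u(2)] by (simp add: u flip_append)
qed

definition matched_round :: "bool list set \<Rightarrow> bool list \<Rightarrow> nat" where
  "matched_round A x = (LEAST j. \<not> unmatched False (Suc j) A x)"

lemma matched_round_spec:
  assumes "unmatched False 0 A x" "\<not> unmatched False t A x"
  defines "j \<equiv> matched_round A x"
  shows "j < t" "unmatched True j A (flip j x)" "\<not> unmatched True (Suc j) A (flip j x)"
proof -
  obtain t' where t: "t = Suc t'" using assms(1,2) by (cases t) auto
  let ?P = "\<lambda>j. \<not> unmatched False (Suc j) A x"
  have "?P t'" using assms(2) t by simp
  then have stop: "?P j" and "j \<le> t'"
    unfolding j_def matched_round_def by (rule LeastI, rule Least_le)
  then show "j < t" using t by simp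
  have "unmatched False j A x"
  proof (cases j)
    case (Suc k)
    then have "\<not> ?P k" unfolding j_def matched_round_def by (metis lessI not_less_Least)
    with Suc show ?thesis by simp
  qed (use assms(1) in simp)
  with stop show "unmatched True j A (flip j x)" "\<not> unmatched True (Suc j) A (flip j x)"
    by simp_all
qed

text \<open>A deficient x receives the spare extension of the surplus point it was paired with.\<close>
definition partner :: "bool list set \<Rightarrow> bool list \<Rightarrow> bool list" where
  "partner A x =
     (if unmatched False 0 A x then flip (matched_round A x) x @ [True]
      else if x @ [False] \<in> A then x @ [False] else x @ [True])"

lemma partner_mem: "\<not> unmatched False t A x \<Longrightarrow> partner A x \<in> A"
  using matched_round_spec(2)[of A x t] unmatched_antimono[of True _ A _ 0]
  by (auto simp: partner_def)

lemma hamming_partner: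
  assumes "length x = m" "t \<le> m" "\<not> unmatched False t A x"
  shows "hamming x (take m (partner A x)) \<le> 1"
  using assms matched_round_spec(1)[of A x t] by (auto simp: partner_def hamming_flip)

lemma partner_deficient_neq:
  assumes "unmatched False 0 A x" "\<not> unmatched False t A x" "\<not> unmatched False 0 A y"
  shows "partner A x \<noteq> partner A y"
proof -
  let ?z = "flip (matched_round A x) x"
  have "unmatched True 0 A ?z"
    using matched_round_spec(2)[OF assms(1,2)] unmatched_antimono by blast
  then have "?z @ [False] \<in> A" by simp
  then show ?thesis using assms(1,3) by (auto simp: partner_def)
qed

lemma inj_on_partner: "inj_on (partner A) {x. \<not> unmatched False t A x}"
proof (rule inj_onI)
  fix x y assume "x \<in> {x. \<not> unmatched False t A x}" "y \<in> {x. \<not> unmatched False t A x}"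
    and eq: "partner A x = partner A y"
  then have x: "\<not> unmatched False t A x" and y: "\<not> unmatched False t A y" by simp_all
  consider "\<not> unmatched False 0 A x" "\<not> unmatched False 0 A y"
    | "unmatched False 0 A x" "unmatched False 0 A y"
    | "unmatched False 0 A x" "\<not> unmatched False 0 A y"
    | "\<not> unmatched False 0 A x" "unmatched False 0 A y" by blast
  then show "x = y"
  proof cases
    case 1
    with eq show ?thesis by (simp add: partner_def split: if_splits)
  next
    case 2
    define jx jy where "jx = matched_round A x" and "jy = matched_round A y"
    have z: "flip jx x = flip jy y" using eq 2 by (simp add: partner_def jx_def jy_def)
    then have "jx = jy"
      using matched_round_spec(2,3)[OF 2(1) x, folded jx_def] matched_round_spec(2,3)[OF 2(2) y, folded jy_def]
      by (metis unmatched_last_round_unique)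
    with z show ?thesis by (metis flip_flip)
  next
    case 3
    with partner_deficient_neq[OF _ x] eq show ?thesis by blast
  next
    case 4
    with partner_deficient_neq[OF _ y] eq show ?thesis by metis
  qed
qed

lemma exists_matching:
  assumes "A \<subseteq> cube (Suc m)" "card A = 2 ^ m" "t \<le> m"
  shows "\<exists>\<phi>. bij_betw \<phi> (cube m) A \<and>
    1 - card {x \<in> cube m. unmatched False t A x} / 2 ^ m
      \<le> unif_prob (cube m) (\<lambda>x. hamming x (take m (\<phi> x)) \<le> 1)"
proof -
  define G where "G = {x \<in> cube m. \<not> unmatched False t A x}"
  have "inj_on (partner A) G"
    by (rule inj_on_subset[OF inj_on_partner]) (auto simp: G_def)
  moreover have "partner A ` G \<subseteq> A"
    using partner_mem by (auto simp: G_def)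
  moreover have "finite A" "card (cube m) = card A"
    using assms(1,2) by (auto simp: card_cube finite_subset)
  ultimately obtain \<phi> where \<phi>: "bij_betw \<phi> (cube m) A" "\<forall>x\<in>G. \<phi> x = partner A x"
    using bij_betw_extend_inj_on[of "cube m" A G "partner A"] by (auto simp: G_def)
  define bad where "bad = card {x \<in> cube m. unmatched False t A x}"
  define good where "good = card {x \<in> cube m. hamming x (take m (\<phi> x)) \<le> 1}"
  have "G \<subseteq> {x \<in> cube m. hamming x (take m (\<phi> x)) \<le> 1}"
    using \<phi>(2) hamming_partner assms(3) by (auto simp: G_def cube_def)
  then have "card G \<le> good"
    unfolding good_def by (intro card_mono) auto
  moreover have "G = cube m - {x \<in> cube m. unmatched False t A x}"
    by (auto simp: G_def)
  then have "card G = 2 ^ m - bad"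
    by (simp add: bad_def card_Diff_subset card_cube)
  moreover have "bad \<le> 2 ^ m"
    unfolding bad_def card_cube[symmetric] by (rule card_mono) auto
  ultimately have "2 ^ m - bad \<le> good" "bad \<le> 2 ^ m" by simp_all
  then have "2 ^ m - real bad \<le> real good"
    using of_nat_le_iff[of "2 ^ m - bad" good, where 'a = real] by (simp add: of_nat_diff)
  then have "(2 ^ m - real bad) / 2 ^ m \<le> real good / 2 ^ m"
    by (rule divide_right_mono) simp
  then have "1 - real bad / 2 ^ m \<le> real good / 2 ^ m"
    by (simp add: diff_divide_distrib)
  then show ?thesis
    using \<phi>(1) by (auto simp: bad_def good_def unif_prob_def card_cube)
qed

section \<open>Unmatched points of a uniformly random set\<close>

fun unmatched_prob :: "nat \<Rightarrow> real" where
  "unmatched_prob 0 = 1 / 4"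
| "unmatched_prob (Suc j) = unmatched_prob j * (1 - unmatched_prob j)"

lemma unmatched_prob_bounds: "0 \<le> unmatched_prob j \<and> unmatched_prob j \<le> 1 / (real j + 4)"
proof (induction j)
  case (Suc j)
  let ?p = "unmatched_prob j" and ?y = "1 / (real j + 4)"
  have "?y \<le> 1 / 4" by (simp add: field_simps)
  moreover have "0 \<le> ?p" "?p \<le> ?y" using Suc.IH by auto
  ultimately have p: "0 \<le> ?p" "?p \<le> ?y" "?y + ?p \<le> 1" by linarith+
  have "?y * (1 - ?y) - ?p * (1 - ?p) = (?y - ?p) * (1 - ?y - ?p)"
    by (simp add: algebra_simps)
  also have "\<dots> \<ge> 0" using p by simp
  finally have "?p * (1 - ?p) \<le> ?y * (1 - ?y)" by simp
  also have "?y * (1 - ?y) = (real j + 3) / ((real j + 4) * (real j + 4))"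
    by (simp add: field_simps)
  also have "\<dots> \<le> 1 / (real (Suc j) + 4)"
  proof -
    have "(real j + 3) * (real j + 5) \<le> (real j + 4) * (real j + 4)"
      by (simp add: algebra_simps)
    then show ?thesis by (simp add: divide_simps add.commute)
  qed
  finally show ?case using p by simp
qed simp

lemma sum_Pow_block_unmatched:
  "length u = j \<Longrightarrow>
     (\<Sum>A\<in>Pow (block j s). of_bool (unmatched b j A (u @ s)) :: real)
       = unmatched_prob j * 2 ^ card (block j s)"
proof (induction j arbitrary: u s b)
  case 0
  have "Pow (block 0 s) \<inter> {A. unmatched b 0 A s} = {if b then block 0 s else {}}"
    by (auto simp: block_0)
  moreover have "card (block 0 s) = 2" by (simp add: block_0)
  ultimately show ?case using 0 by simp
next
  case (Suc j)
  then obtain u' c where u: "u = u' @ [c]" "length u' = j" by (metis length_Suc_conv_rev)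
  define X where "X = block j (c # s)"
  define Y where "Y = block j ((\<not> c) # s)"
  have disj: "X \<inter> Y = {}" unfolding X_def Y_def by (rule block_disjoint) simp_all
  \<comment> \<open>The state of \<open>u' @ c # s\<close> is decided by A on X, that of its neighbour on the disjoint Y.\<close>
  define f where "f A = (of_bool (unmatched b j A (u' @ c # s)) :: real)" for A
  define g where "g A = 1 - (of_bool (unmatched (\<not> b) j A (u' @ (\<not> c) # s)) :: real)" for A
  have f_loc: "f A = f (A \<inter> X)" for A
    unfolding f_def X_def
    using unmatched_local[OF u(2), of A "c # s" "A \<inter> block j (c # s)"] by auto
  have g_loc: "g A = g (A \<inter> Y)" for A
    unfolding g_def Y_def
    using unmatched_local[OF u(2), of A "(\<not> c) # s" "A \<inter> block j ((\<not> c) # s)"] by auto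
  have "(\<Sum>A\<in>Pow (block (Suc j) s). of_bool (unmatched b (Suc j) A (u @ s)))
      = (\<Sum>A\<in>Pow (X \<union> Y). f A * g A)"
    unfolding u block_Suc[of j s c] X_def[symmetric] Y_def[symmetric]
    by (intro sum.cong refl) (simp add: f_def g_def flip_append u(2))
  also have "\<dots> = (\<Sum>A\<in>Pow X. f A) * (\<Sum>A\<in>Pow Y. g A)"
    by (rule sum_Pow_Un_mult[where f = f and g = g, OF disj f_loc g_loc])
  also have "\<dots> = unmatched_prob j * 2 ^ card X * (2 ^ card Y - unmatched_prob j * 2 ^ card Y)"
    using Suc.IH[OF u(2)] by (simp add: X_def Y_def f_def g_def sum_subtractf card_Pow)
  also have "\<dots> = unmatched_prob (Suc j) * 2 ^ card (X \<union> Y)"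
    using disj by (simp add: card_Un_disjoint X_def Y_def power_add algebra_simps)
  finally show ?case by (simp add: X_def Y_def block_Suc[of j s c])
qed

lemma card_many_unmatched:
  fixes a :: real
  assumes "t \<le> m"
  shows "card {A \<in> Pow (cube (Suc m)). a \<le> card {x \<in> cube m. unmatched False t A x}}
           \<le> 2 ^ 2 ^ Suc m * exp (unmatched_prob t * 2 ^ (m - t) - a / 2 ^ Suc t)"
proof -
  define Y where "Y s A = real (card {u \<in> cube t. unmatched False t A (u @ s)}) / 2 ^ t" for s A
  have count:
    "real (card {x \<in> cube m. unmatched False t A x}) = 2 ^ t * (\<Sum>s\<in>cube (m - t). Y s A)" for A
    by (simp add: card_cube_split[OF assms] Y_def sum_distrib_left)
  have local: "Y s A = Y s (A \<inter> block t s)" for s A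
    unfolding Y_def using unmatched_local[of _ t A s "A \<inter> block t s"]
    by (intro arg_cong[where f = "\<lambda>X. real (card X) / 2 ^ t"] Collect_cong) (auto simp: cube_def)
  have le_1: "Y s A \<le> 1" for s A
    using card_mono[OF finite_cube, of "{u \<in> cube t. unmatched False t A (u @ s)}" t]
    by (auto simp: Y_def card_cube)
  have nonneg: "0 \<le> Y s A" for s A
    by (simp add: Y_def)
  have disj: "disjoint_family_on (block t) (cube (m - t))"
    unfolding disjoint_family_on_def cube_def by (metis block_disjoint mem_Collect_eq)
  have mean: "(\<Sum>A\<in>Pow (block t s). Y s A) = unmatched_prob t * 2 ^ card (block t s)" for s
  proof -
    have "(\<Sum>A\<in>Pow (block t s). Y s A)
        = (\<Sum>A\<in>Pow (block t s). \<Sum>u\<in>cube t. of_bool (unmatched False t A (u @ s))) / 2 ^ t"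
      by (simp add: Y_def sum_divide_distrib Int_def)
    also have "\<dots> = (\<Sum>u\<in>cube t. \<Sum>A\<in>Pow (block t s). of_bool (unmatched False t A (u @ s))) / 2 ^ t"
      by (subst sum.swap) (rule refl)
    also have "\<dots> = (\<Sum>u\<in>cube t. unmatched_prob t * 2 ^ card (block t s)) / 2 ^ t"
      by (intro arg_cong[where f = "\<lambda>x. x / 2 ^ t"] sum.cong refl sum_Pow_block_unmatched)
        (simp add: cube_def)
    also have "\<dots> = unmatched_prob t * 2 ^ card (block t s)"
      by (simp add: card_cube)
    finally show ?thesis .
  qed
  have "{A \<in> Pow (cube (Suc m)). a \<le> card {x \<in> cube m. unmatched False t A x}}
      = {A \<in> Pow (\<Union>s\<in>cube (m - t). block t s). a / 2 ^ t \<le> (\<Sum>s\<in>cube (m - t). Y s A)}"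
    by (simp add: count cube_Suc_eq_UN_block[OF assms, symmetric] pos_divide_le_eq
        mult.commute[of _ "2 ^ t"])
  also have "card \<dots> \<le> 2 ^ card (\<Union>s\<in>cube (m - t). block t s)
      * exp (unmatched_prob t * card (cube (m - t)) - a / 2 ^ t / 2)"
    by (intro card_Pow_sum_ge_chernoff finite_cube finite_block disj local nonneg le_1 mean[THEN eq_refl])
  finally show ?thesis
    by (simp add: cube_Suc_eq_UN_block[OF assms, symmetric] card_cube mult.commute)
qed

lemma unmatched_exponent_le:
  "unmatched_prob (m div 2) * 2 ^ (m - m div 2)
       - 4 * 2 ^ m / (real (m div 2) + 4) / 2 ^ Suc (m div 2)
     \<le> - (2 powr (real m / 2) / (real m + 5))"
proof -
  let ?t = "m div 2"
  define B :: real where "B = 2 ^ (m - ?t)"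
  have "2 ^ m = 2 ^ ?t * B"
    by (simp add: B_def power_add[symmetric])
  then have "4 * 2 ^ m / 2 ^ Suc ?t = 2 * B"
    by simp
  then have "4 * 2 ^ m / (real ?t + 4) / 2 ^ Suc ?t = 2 * (B / (real ?t + 4))"
    by (metis divide_divide_eq_left divide_divide_eq_left' times_divide_eq_right)
  moreover have "unmatched_prob ?t * B \<le> B / (real ?t + 4)"
    using unmatched_prob_bounds[of ?t] by (simp add: B_def divide_simps)
  moreover have "2 powr (real m / 2) / (real m + 5) \<le> B / (real ?t + 4)"
  proof (rule frac_le)
    have "real m / 2 \<le> real (m - ?t)" by linarith
    then show "2 powr (real m / 2) \<le> B"
      by (simp add: B_def powr_realpow[symmetric])
  qed (auto simp: B_def)
  ultimately show ?thesis by (simp add: B_def)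
qed

section \<open>Probability of a good matching\<close>

lemma good_matching_if_le:
  assumes "1 \<le> n" "real n \<le> C" "A \<subseteq> cube n" "card A = 2 ^ (n - 1)"
  shows "good_matching C n A"
proof -
  have "card (cube (n - 1)) = card A" "finite A"
    using assms(3,4) by (auto simp: card_cube finite_subset)
  then obtain \<phi> where "bij_betw \<phi> (cube (n - 1)) A"
    using finite_same_card_bij[OF finite_cube] by blast
  moreover have "1 - C / real n \<le> 0" using assms(1,2) by (simp add: field_simps)
  ultimately show ?thesis
    unfolding good_matching_def by (metis order.trans unif_prob_def divide_nonneg_nonneg of_nat_0_le_iff)
qed

lemma prob_good_matching_small:
  assumes "real (Suc m) \<le> C"
  shows "unif_prob {A. A \<subseteq> cube (Suc m) \<and> card A = 2 ^ m} (good_matching C (Suc m)) = 1"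
proof -
  let ?S = "{A. A \<subseteq> cube (Suc m) \<and> card A = 2 ^ m}"
  have "{A \<in> ?S. good_matching C (Suc m) A} = ?S"
    using good_matching_if_le[of "Suc m" C] assms by auto
  moreover have "card ?S \<noteq> 0"
    using card_half_subsets_pos[of m] by linarith
  ultimately show ?thesis
    by (simp add: unif_prob_def)
qed

lemma good_matching_if_few_unmatched:
  assumes "A \<subseteq> cube (Suc m)" "card A = 2 ^ m" "8 \<le> C"
    and few: "card {x \<in> cube m. unmatched False (m div 2) A x}
                < 4 * 2 ^ m / (real (m div 2) + 4)"
  shows "good_matching C (Suc m) A"
proof -
  let ?t = "m div 2"
  obtain \<phi> where \<phi>: "bij_betw \<phi> (cube m) A"
    "1 - card {x \<in> cube m. unmatched False ?t A x} / 2 ^ m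
       \<le> unif_prob (cube m) (\<lambda>x. hamming x (take m (\<phi> x)) \<le> 1)"
    using exists_matching[OF assms(1,2), of ?t] by auto
  have "card {x \<in> cube m. unmatched False ?t A x} / 2 ^ m \<le> 4 / (real ?t + 4)"
    using few by (simp add: divide_simps mult.commute)
  also have "\<dots> \<le> C / real (Suc m)"
  proof -
    have "Suc m \<le> 2 * (?t + 4)" by presburger
    then have "real (Suc m) \<le> real (2 * (?t + 4))" by (simp only: of_nat_le_iff)
    then have "4 * real (Suc m) \<le> 8 * (real ?t + 4)" by simp
    also have "\<dots> \<le> C * (real ?t + 4)" using assms(3) by (intro mult_right_mono) auto
    finally show ?thesis by (simp add: divide_simps)
  qed
  finally show ?thesis
    unfolding good_matching_def using \<phi> by auto
qed

lemma prob_good_matching: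
  assumes "8 \<le> C"
  shows "1 - 2 ^ Suc m * exp (- (2 powr (real m / 2) / (real m + 5)))
           \<le> unif_prob {A. A \<subseteq> cube (Suc m) \<and> card A = 2 ^ m} (good_matching C (Suc m))"
proof -
  let ?S = "{A. A \<subseteq> cube (Suc m) \<and> card A = 2 ^ m}" and ?t = "m div 2"
  let ?E = "2 powr (real m / 2) / (real m + 5)" and ?N = "(2::real) ^ 2 ^ Suc m"
  let ?a = "4 * 2 ^ m / (real ?t + 4)"
  have "{A \<in> ?S. \<not> good_matching C (Suc m) A}
      \<subseteq> {A \<in> Pow (cube (Suc m)). ?a \<le> card {x \<in> cube m. unmatched False ?t A x}}"
    using good_matching_if_few_unmatched[OF _ _ assms, of _ m] by (auto simp: not_less[symmetric])
  then have "real (card {A \<in> ?S. \<not> good_matching C (Suc m) A})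
      \<le> card {A \<in> Pow (cube (Suc m)). ?a \<le> card {x \<in> cube m. unmatched False ?t A x}}"
    by (intro of_nat_mono card_mono) auto
  also have "\<dots> \<le> ?N * exp (unmatched_prob ?t * 2 ^ (m - ?t) - ?a / 2 ^ Suc ?t)"
    by (rule card_many_unmatched) simp
  also have "\<dots> \<le> ?N * exp (- ?E)"
    using unmatched_exponent_le[of m] by (intro mult_left_mono) simp_all
  finally have bad: "card {A \<in> ?S. \<not> good_matching C (Suc m) A} \<le> ?N * exp (- ?E)" .
  have card_S: "?N / 2 ^ Suc m \<le> card ?S"
    by (rule card_half_subsets_ge)
  have pos: "card ?S > 0"
    by (rule card_half_subsets_pos)
  then have "1 - ?N * exp (- ?E) / card ?S \<le> unif_prob ?S (good_matching C (Suc m))"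
    using bad by (intro unif_prob_ge) (simp_all add: card_gt_0_iff)
  moreover have "?N * exp (- ?E) / card ?S \<le> ?N * exp (- ?E) / (?N / 2 ^ Suc m)"
    using card_S pos by (intro divide_left_mono) auto
  moreover have "?N * exp (- ?E) / (?N / 2 ^ Suc m) = 2 ^ Suc m * exp (- ?E)"
    by simp
  ultimately show ?thesis by linarith
qed

lemma failure_bound_eventually:
  "\<exists>M::real. \<forall>x\<ge>M.
     2 * 2 powr x * exp (- (2 powr (x / 2) / (x + 5))) \<le> 2 powr (- (2 powr ((x + 1) / 4)))"
proof -
  let ?f = "\<lambda>x::real. 2 * 2 powr x * exp (- (2 powr (x / 2) / (x + 5)))"
  let ?g = "\<lambda>x::real. 2 powr (- (2 powr ((x + 1) / 4)))"
  have "((\<lambda>x. ?f x / ?g x) \<longlongrightarrow> 0) at_top"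
    by real_asymp
  then have "\<forall>\<^sub>F x in at_top. ?f x / ?g x < 1"
    by (rule order_tendstoD) simp
  then have "\<forall>\<^sub>F x in at_top. ?f x \<le> ?g x"
    by eventually_elim (simp add: divide_less_eq)
  then show ?thesis by (simp add: eventually_at_top_linorder)
qed

theorem mainTheorem10:
  shows "\<exists>(c::real) (C::real). c > 0 \<and> (\<forall>n::nat. n \<ge> 1 \<longrightarrow>
     unif_prob {A. A \<subseteq> cube n \<and> card A = 2 ^ (n - 1)} (good_matching C n)
       \<ge> 1 - 2 powr (- (2 powr (c * real n))))"
proof -
  obtain M :: real where M: "\<And>x. x \<ge> M \<Longrightarrow>
      2 * 2 powr x * exp (- (2 powr (x / 2) / (x + 5))) \<le> 2 powr (- (2 powr ((x + 1) / 4)))"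
    using failure_bound_eventually by blast
  define C :: real where "C = max 8 (M + 1)"
  have bound: "1 - 2 powr (- (2 powr ((real m + 1) / 4)))
      \<le> unif_prob {A. A \<subseteq> cube (Suc m) \<and> card A = 2 ^ m} (good_matching C (Suc m))" for m
  proof (cases "real (Suc m) \<le> C")
    case True
    then show ?thesis
      using prob_good_matching_small powr_ge_zero[of 2 "- (2 powr ((real m + 1) / 4))"] by simp
  next
    case False
    then have "M \<le> real m" and "8 \<le> C" by (simp_all add: C_def)
    then show ?thesis
      using prob_good_matching[of C m] M[of "real m"] by (simp add: powr_realpow)
  qed
  show ?thesis
  proof (rule exI[of _ "1 / 4"], rule exI[of _ C], intro conjI allI impI)
    fix n :: nat assume "n \<ge> 1"
    then show "1 - 2 powr (- (2 powr (1 / 4 * real n)))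
        \<le> unif_prob {A. A \<subseteq> cube n \<and> card A = 2 ^ (n - 1)} (good_matching C n)"
      using bound by (cases n) (simp_all add: add.commute)
  qed simp
qed

end
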